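(* Let $\alpha\in(0,1)$ and let $X_1,X_2,Y$ be real-valued random variables on a probability space $(\Omega,\mathcal A,\mathbb Q)$. If $\mathbb E_{\mathbb Q}\,\mathrm S^{\rm E}_{\alpha,\theta}(X_1,Y)\le\mathbb E_{\mathbb Q}\,\mathrm S^{\rm E}_{\alpha,\theta}(X_2,Y)$ for every $\theta\in\mathbb R$, then $X_1$ dominates $X_2$ as an $\alpha$-expectile forecast, i.e. $\mathbb E_{\mathbb Q}\,\mathrm S(X_1,Y)\le\mathbb E_{\mathbb Q}\,\mathrm S(X_2,Y)$ (expectations in $[0,\infty]$) for every $\mathrm S\in\mathcal S^{\rm E}_\alpha$.
   Context: $(t)_+=\max(t,0)$. For a convex $\phi:\mathbb R\to\mathbb R$, $\phi'$ denotes its left-hand derivative. $\mathcal S^{\rm E}_\alpha$ is the class of all scoring functions $\mathrm S(x,y)=|\mathbb 1(y<x)-\alpha|\,(\phi(y)-\phi(x)-\phi'(x)(y-x))$, $x,y\in\mathbb R$, with $\phi$ convex (these are nonnegative). The elementary expectile scoring function is $\mathrm S^{\rm E}_{\alpha,\theta}(x,y)=|\mathbb 1(y<x)-\alpha|\big((y-\theta)_+-(x-\theta)_+-(y-x)\mathbb 1(\theta<x)\big)$, i.e. it equals $(1-\alpha)|y-\theta|$ if $y\le\theta<x$, $\alpha|y-\theta|$ if $x\le\theta<y$, and $0$ otherwise. *)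

theory Defs
  imports "HOL-Probability.Probability"
begin

definition left_deriv :: "(real \<Rightarrow> real) \<Rightarrow> real \<Rightarrow> real" where
  "left_deriv \<phi> x = Lim (at_left x) (\<lambda>t. (\<phi> x - \<phi> t) / (x - t))"

definition expectile_score :: "real \<Rightarrow> (real \<Rightarrow> real) \<Rightarrow> real \<Rightarrow> real \<Rightarrow> real" where
  "expectile_score \<alpha> \<phi> x y =
     \<bar>(if y < x then 1 else 0) - \<alpha>\<bar> * (\<phi> y - \<phi> x - left_deriv \<phi> x * (y - x))"

definition expectile_class :: "real \<Rightarrow> (real \<Rightarrow> real \<Rightarrow> real) set" where
  "expectile_class \<alpha> = {S. \<exists>\<phi>. convex_on UNIV \<phi> \<and> S = expectile_score \<alpha> \<phi>}"

definition elem_expectile_score :: "real \<Rightarrow> real \<Rightarrow> real \<Rightarrow> real \<Rightarrow> real" where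
  "elem_expectile_score \<alpha> \<theta> x y =
     \<bar>(if y < x then 1 else 0) - \<alpha>\<bar> *
       (max (y - \<theta>) 0 - max (x - \<theta>) 0 - (y - x) * (if \<theta> < x then 1 else 0))"

end

theory Submission
  imports Defs
begin

text \<open>
  Every score in the class is a mixture of elementary scores: with \<open>\<phi>'\<close> the left derivative of
  \<open>\<phi>\<close> and \<open>d\<phi>'\<close> its Lebesgue--Stieltjes measure,
  \<open>S(x, y) = \<integral> S\<^sup>E\<^sub>\<alpha>\<^sub>,\<^sub>\<theta>(x, y) d\<phi>'(\<theta>)\<close>.
  This rests on \<open>\<phi>(y) - \<phi>(x) - \<phi>'(x)(y - x) = \<integral>\<^sub>x\<^sup>y (\<phi>'(u) - \<phi>'(x)) du\<close> (the fundamental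
  theorem of calculus for convex functions) and Tonelli's theorem. Exchanging the expectation
  with the mixture integral once more, the hypothesis for each \<open>\<theta>\<close> integrates to the claim.
\<close>

definition slope :: "(real \<Rightarrow> real) \<Rightarrow> real \<Rightarrow> real \<Rightarrow> real" where
  "slope f s t = (f t - f s) / (t - s)"

lemma convex_slope_mono:
  fixes f :: "real \<Rightarrow> real"
  assumes f: "convex_on UNIV f" and "a < b" "b < c"
  shows "slope f a b \<le> slope f a c" "slope f a c \<le> slope f b c"
proof -
  have swap: "(f s - f t) / (s - t) = slope f s t" for s t
    unfolding slope_def by (metis minus_diff_eq minus_divide_divide)
  show "slope f a b \<le> slope f a c" "slope f a c \<le> slope f b c"
    using convex_on_slope_le[OF f _ _ assms(2,3)] by (simp_all add: swap)
qed

lemma left_slopes_bdd_above: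
  assumes f: "convex_on UNIV f"
  shows "bdd_above ((\<lambda>t. slope f t x) ` {..<x})"
proof -
  have "slope f t x \<le> slope f x (x + 1)" if "t < x" for t
    using convex_slope_mono[OF f that, of "x + 1"] by linarith
  then show ?thesis by (intro bdd_aboveI2[where M = "slope f x (x + 1)"]) auto
qed

lemma tendsto_left_slopes:
  assumes f: "convex_on UNIV f"
  shows "((\<lambda>t. slope f t x) \<longlongrightarrow> (SUP t\<in>{..<x}. slope f t x)) (at_left x)"
proof (rule order_tendstoI)
  fix a assume "a < (SUP t\<in>{..<x}. slope f t x)"
  then obtain t0 where t0: "t0 < x" "a < slope f t0 x"
    using less_cSUP_iff[OF _ left_slopes_bdd_above[OF f]] by auto
  have "eventually (\<lambda>t. t \<in> {t0<..<x}) (at_left x)"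
    by (rule eventually_at_left_real[OF t0(1)])
  then show "eventually (\<lambda>t. a < slope f t x) (at_left x)"
  proof eventually_elim
    case (elim t)
    then have "slope f t0 x \<le> slope f t x"
      using convex_slope_mono(2)[OF f, of t0 t x] by simp
    with t0(2) show ?case by linarith
  qed
next
  fix a assume a: "(SUP t\<in>{..<x}. slope f t x) < a"
  have "slope f t x < a" if "t < x" for t
  proof -
    have "slope f t x \<le> (SUP t\<in>{..<x}. slope f t x)"
      by (rule cSUP_upper) (use that left_slopes_bdd_above[OF f] in auto)
    with a show ?thesis by simp
  qed
  moreover have "eventually (\<lambda>t. t < x) (at_left x)"
    by (simp add: eventually_at_filter)
  ultimately show "eventually (\<lambda>t. slope f t x < a) (at_left x)"
    by (auto elim: eventually_mono)
qed

lemma left_deriv_eq_SUP_slopes: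
  assumes "convex_on UNIV f"
  shows "left_deriv f x = (SUP t\<in>{..<x}. slope f t x)"
  unfolding left_deriv_def using tendsto_left_slopes[OF assms]
  by (intro tendsto_Lim) (auto simp: slope_def)

lemma slope_le_left_deriv:
  assumes f: "convex_on UNIV f" and "t < x"
  shows "slope f t x \<le> left_deriv f x"
  unfolding left_deriv_eq_SUP_slopes[OF f] using assms(2)
  by (intro cSUP_upper left_slopes_bdd_above[OF f]) auto

lemma left_deriv_le_slope:
  assumes f: "convex_on UNIV f" and "x < y"
  shows "left_deriv f x \<le> slope f x y"
  unfolding left_deriv_eq_SUP_slopes[OF f]
proof (rule cSUP_least)
  fix t assume "t \<in> {..<x}"
  then show "slope f t x \<le> slope f x y"
    using convex_slope_mono[OF f _ assms(2), of t] by auto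
qed auto

lemma mono_left_deriv:
  assumes f: "convex_on UNIV f"
  shows "mono (left_deriv f)"
proof
  fix x y :: real assume "x \<le> y"
  then show "left_deriv f x \<le> left_deriv f y"
    using left_deriv_le_slope[OF f, of x y] slope_le_left_deriv[OF f, of x y]
    by (cases "x = y") auto
qed

lemma left_deriv_continuous_from_left:
  assumes f: "convex_on UNIV f"
  shows "(left_deriv f \<longlongrightarrow> left_deriv f x) (at_left x)"
proof (rule order_tendstoI)
  fix a assume "a < left_deriv f x"
  then obtain t0 where t0: "t0 < x" "a < slope f t0 x"
    using less_cSUP_iff[OF _ left_slopes_bdd_above[OF f]]
    by (auto simp: left_deriv_eq_SUP_slopes[OF f])
  have "isCont f x"
    using convex_on_continuous[OF _ f] by (simp add: continuous_on_eq_continuous_at)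
  then have "((\<lambda>t. slope f t0 t) \<longlongrightarrow> slope f t0 x) (at_left x)"
    unfolding slope_def using t0(1)
    by (intro tendsto_intros) (auto simp: isCont_def filterlim_at_split)
  then have "eventually (\<lambda>t. a < slope f t0 t) (at_left x)"
    using t0(2) order_tendstoD(1) by blast
  moreover have "eventually (\<lambda>t. t \<in> {t0<..<x}) (at_left x)"
    by (rule eventually_at_left_real[OF t0(1)])
  ultimately show "eventually (\<lambda>t. a < left_deriv f t) (at_left x)"
  proof eventually_elim
    case (elim t)
    then show ?case
      using slope_le_left_deriv[OF f, of t0 t] by simp
  qed
next
  fix a assume a: "left_deriv f x < a"
  have "left_deriv f t < a" if "t < x" for t
    using monoD[OF mono_left_deriv[OF f], of t x] that a by simp
  moreover have "eventually (\<lambda>t. t < x) (at_left x)"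
    by (simp add: eventually_at_filter)
  ultimately show "eventually (\<lambda>t. left_deriv f t < a) (at_left x)"
    by (auto elim: eventually_mono)
qed

lemma convex_increment_bounds:
  assumes f: "convex_on UNIV f" and "a \<le> b"
  shows "(b - a) * left_deriv f a \<le> f b - f a" "f b - f a \<le> (b - a) * left_deriv f b"
proof (atomize (full), cases "a = b")
  case False
  with assms have "a < b" by simp
  then show "(b - a) * left_deriv f a \<le> f b - f a \<and> f b - f a \<le> (b - a) * left_deriv f b"
    using left_deriv_le_slope[OF f \<open>a < b\<close>] slope_le_left_deriv[OF f \<open>a < b\<close>]
    by (simp add: slope_def field_simps)
qed simp

lemma left_deriv_integrable_on:
  assumes "convex_on UNIV f"
  shows "left_deriv f integrable_on {a..b}"
  using mono_left_deriv[OF assms] by (intro integrable_on_mono_on) (auto simp: mono_on_def monoD)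

lemma convex_increment_integral_error:
  assumes f: "convex_on UNIV f" and "a \<le> b"
  shows "\<bar>f b - f a - integral {a..b} (left_deriv f)\<bar> \<le> (b - a) * (left_deriv f b - left_deriv f a)"
proof -
  let ?g = "left_deriv f"
  have "integral {a..b} (\<lambda>_. ?g a) \<le> integral {a..b} ?g" "integral {a..b} ?g \<le> integral {a..b} (\<lambda>_. ?g b)"
    by (intro integral_le left_deriv_integrable_on[OF f];
        use assms mono_left_deriv[OF f] in \<open>auto simp: monoD\<close>)+
  then show ?thesis
    using convex_increment_bounds[OF f assms(2)] assms(2) by (simp add: abs_le_iff algebra_simps)
qed

text \<open>Over \<open>n\<close> cells of width \<open>h\<close> the one-cell bounds telescope, so the error is
  \<open>O(1/n)\<close> on a fixed interval.\<close>

lemma convex_increment_integral_error_cells: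
  assumes f: "convex_on UNIV f" and "h \<ge> 0"
  shows "\<bar>f (x + real n * h) - f x - integral {x..x + real n * h} (left_deriv f)\<bar>
     \<le> h * (left_deriv f (x + real n * h) - left_deriv f x)"
proof (induction n)
  case (Suc n)
  let ?g = "left_deriv f"
  define c where "c = x + real n * h"
  have c: "x + real (Suc n) * h = c + h" by (simp add: c_def algebra_simps)
  have le: "x \<le> c" "c \<le> c + h" using assms by (auto simp: c_def)
  have "integral {x..c} ?g + integral {c..c + h} ?g = integral {x..c + h} ?g"
    by (rule Henstock_Kurzweil_Integration.integral_combine[OF le left_deriv_integrable_on[OF f]])
  moreover have "\<bar>f (c + h) - f c - integral {c..c + h} ?g\<bar> \<le> h * (?g (c + h) - ?g c)"
    using convex_increment_integral_error[OF f le(2)] by simp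
  ultimately show ?case
    using Suc.IH unfolding c by (simp add: c_def abs_le_iff algebra_simps)
qed simp

lemma has_integral_left_deriv:
  assumes f: "convex_on UNIV f" and "a \<le> b"
  shows "(left_deriv f has_integral (f b - f a)) {a..b}"
proof -
  let ?D = "\<bar>f b - f a - integral {a..b} (left_deriv f)\<bar>"
  let ?C = "(b - a) * (left_deriv f b - left_deriv f a)"
  have "?D \<le> ?C / real n" if "n > 0" for n :: nat
    using convex_increment_integral_error_cells[OF f, of "(b - a) / real n" a n] that assms(2)
    by simp
  then have "?D \<le> 0"
    by (intro LIMSEQ_le_const[OF lim_const_over_n[of ?C]]) (auto intro: exI[of _ 1])
  then have "integral {a..b} (left_deriv f) = f b - f a" by simp
  then show ?thesis
    using left_deriv_integrable_on[OF f] by (metis has_integral_integral)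
qed

text \<open>\<open>interval_measure\<close> needs a right-continuous distribution function, whereas \<open>\<phi>'\<close> is
  left-continuous; so the Lebesgue--Stieltjes measure of \<open>\<phi>'\<close> is built in the reflected
  coordinate \<open>s = -\<theta>\<close>.\<close>

definition left_deriv_measure :: "(real \<Rightarrow> real) \<Rightarrow> real measure" where
  "left_deriv_measure f = interval_measure (\<lambda>s. - left_deriv f (- s))"

lemma sets_left_deriv_measure [simp, measurable_cong]: "sets (left_deriv_measure f) = sets borel"
  by (simp add: left_deriv_measure_def)

lemma space_left_deriv_measure [simp]: "space (left_deriv_measure f) = UNIV"
  by (simp add: left_deriv_measure_def)

lemma reflected_left_deriv_mono:
  assumes "convex_on UNIV f" and "p \<le> q"
  shows "- left_deriv f (- p) \<le> - left_deriv f (- q)"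
  using mono_left_deriv[OF assms(1)] assms(2) by (simp add: monoD)

lemma reflected_left_deriv_continuous_from_right:
  assumes "convex_on UNIV f"
  shows "continuous (at_right a) (\<lambda>s. - left_deriv f (- s))"
proof -
  have "((\<lambda>s. left_deriv f (- s)) \<longlongrightarrow> left_deriv f (- a)) (at_right a)"
    using left_deriv_continuous_from_left[OF assms, of "- a"]
    by (simp add: filterlim_at_left_to_right)
  then show ?thesis
    by (simp add: continuous_within tendsto_minus)
qed

lemma emeasure_left_deriv_measure:
  assumes "convex_on UNIV f" and "p \<le> q"
  shows "emeasure (left_deriv_measure f) {p<..q} = ennreal (left_deriv f (- p) - left_deriv f (- q))"
  using emeasure_interval_measure_Ioc[OF assms(2) reflected_left_deriv_mono[OF assms(1)]
      reflected_left_deriv_continuous_from_right[OF assms(1)]]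
  by (simp add: left_deriv_measure_def)

lemma sigma_finite_left_deriv_measure:
  assumes "convex_on UNIV f"
  shows "sigma_finite_measure (left_deriv_measure f)"
  unfolding left_deriv_measure_def
  by (rule sigma_finite_interval_measure[OF reflected_left_deriv_mono[OF assms]
        reflected_left_deriv_continuous_from_right[OF assms]])

text \<open>Tonelli on the region \<open>a \<le> \<theta> < u < b\<close>, integrating first in \<open>u\<close> and then in \<open>\<theta>\<close>.\<close>

lemma left_deriv_measure_bregman:
  assumes f: "convex_on UNIV f" and ab: "a < b"
  shows "(\<integral>\<^sup>+ s. ennreal (indicator {-b<..-a} s * (b + s)) \<partial>left_deriv_measure f)
       = ennreal (f b - f a - left_deriv f a * (b - a))"
proof -
  let ?\<nu> = "left_deriv_measure f" and ?g = "left_deriv f"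
  interpret \<nu>: sigma_finite_measure ?\<nu> by (rule sigma_finite_left_deriv_measure[OF f])
  interpret P: pair_sigma_finite ?\<nu> lborel ..
  define H where "H s u = (if -b < s \<and> s \<le> -a \<and> -s < u \<and> u < b then 1 else 0 :: ennreal)" for s u
  have H_measurable: "case_prod H \<in> borel_measurable (?\<nu> \<Otimes>\<^sub>M lborel)"
    unfolding H_def by measurable
  have H_lborel: "(\<integral>\<^sup>+ u. H s u \<partial>lborel) = ennreal (indicator {-b<..-a} s * (b + s))" for s
  proof -
    have "(\<lambda>u. H s u) = (\<lambda>u. indicator {-b<..-a} s * indicator {-s<..<b} u)"
      by (auto simp: H_def indicator_def fun_eq_iff)
    then show ?thesis
      by (cases "s \<in> {-b<..-a}") (auto simp: nn_integral_cmult_indicator)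
  qed
  have H_\<nu>: "(\<integral>\<^sup>+ s. H s u \<partial>?\<nu>) = ennreal (indicator {a<..<b} u * (?g u - ?g a))" for u
  proof (cases "a < u \<and> u < b")
    case True
    then have "(\<lambda>s. H s u) = indicator {-u<..-a}"
      by (auto simp: H_def indicator_def fun_eq_iff)
    then show ?thesis
      using True emeasure_left_deriv_measure[OF f, of "-u" "-a"] by simp
  next
    case False
    then have "(\<lambda>s. H s u) = (\<lambda>_. 0)"
      by (auto simp: H_def fun_eq_iff)
    then show ?thesis using False by simp
  qed
  have "((\<lambda>u. ?g u - ?g a) has_integral (f b - f a - ?g a * (b - a))) {a<..<b}"
    using has_integral_diff[OF has_integral_left_deriv[OF f] has_integral_const_real, of a b "?g a"] ab
    by (simp add: has_integral_Icc_iff_Ioo mult.commute)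
  then have "(\<integral>\<^sup>+ u. ennreal (indicator {a<..<b} u * (?g u - ?g a)) \<partial>lborel)
      = ennreal (f b - f a - ?g a * (b - a))"
    by (rule nn_integral_has_integral_lebesgue[rotated]) (use mono_left_deriv[OF f] in \<open>auto simp: monoD\<close>)
  then show ?thesis
    using P.Fubini'[OF H_measurable] by (simp add: H_lborel H_\<nu>)
qed

text \<open>The weights \<open>b - \<theta>\<close> and \<open>\<theta> - a\<close> add up to \<open>b - a\<close>, so this follows from the previous
  lemma and the measure of \<open>[a, b)\<close>.\<close>

lemma left_deriv_measure_bregman_reverse:
  assumes f: "convex_on UNIV f" and ab: "a < b"
  shows "(\<integral>\<^sup>+ s. ennreal (indicator {-b<..-a} s * (- s - a)) \<partial>left_deriv_measure f)
       = ennreal (left_deriv f b * (b - a) - (f b - f a))" (is "?R = _")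
proof -
  let ?\<nu> = "left_deriv_measure f" and ?g = "left_deriv f"
  let ?B = "f b - f a - ?g a * (b - a)"
  have "(\<integral>\<^sup>+ s. ennreal (indicator {-b<..-a} s * (b + s)) \<partial>?\<nu>) + ?R
      = (\<integral>\<^sup>+ s. ennreal (b - a) * indicator {-b<..-a} s \<partial>?\<nu>)"
    by (subst nn_integral_add[symmetric])
       (auto intro!: nn_integral_cong simp: indicator_def simp flip: ennreal_plus)
  also have "\<dots> = ennreal ((b - a) * (?g b - ?g a))"
    using ab emeasure_left_deriv_measure[OF f, of "-b" "-a"]
    by (simp add: nn_integral_cmult_indicator ennreal_mult')
  finally have "?R = ennreal ((b - a) * (?g b - ?g a)) - ennreal ?B"
    unfolding left_deriv_measure_bregman[OF assms] by (metis ennreal_add_diff_cancel_left ennreal_neq_top)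
  also have "\<dots> = ennreal (?g b * (b - a) - (f b - f a))"
    using convex_increment_bounds(1)[OF f] ab by (subst ennreal_minus) (auto simp: algebra_simps)
  finally show ?thesis .
qed

lemma expectile_score_mixture:
  assumes f: "convex_on UNIV f" and "0 \<le> \<alpha>" "\<alpha> \<le> 1"
  shows "ennreal (expectile_score \<alpha> f x y)
       = (\<integral>\<^sup>+ s. ennreal (elem_expectile_score \<alpha> (- s) x y) \<partial>left_deriv_measure f)"
proof -
  let ?\<nu> = "left_deriv_measure f"
  consider "x < y" | "y < x" | "x = y" by linarith
  then show ?thesis
  proof cases
    case 1
    then have "elem_expectile_score \<alpha> (- s) x y = \<alpha> * (indicator {-y<..-x} s * (y + s))" for s
      using assms(2,3) by (auto simp: elem_expectile_score_def indicator_def)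
    then have "(\<integral>\<^sup>+ s. ennreal (elem_expectile_score \<alpha> (- s) x y) \<partial>?\<nu>)
        = ennreal \<alpha> * (\<integral>\<^sup>+ s. ennreal (indicator {-y<..-x} s * (y + s)) \<partial>?\<nu>)"
      using assms by (simp add: ennreal_mult' nn_integral_cmult)
    also have "\<dots> = ennreal \<alpha> * ennreal (f y - f x - left_deriv f x * (y - x))"
      by (simp only: left_deriv_measure_bregman[OF f 1])
    also have "\<dots> = ennreal (expectile_score \<alpha> f x y)"
      using 1 assms by (simp add: expectile_score_def ennreal_mult')
    finally show ?thesis ..
  next
    case 2
    then have "elem_expectile_score \<alpha> (- s) x y = (1 - \<alpha>) * (indicator {-x<..-y} s * (- s - y))" for s
      using assms(2,3) by (auto simp: elem_expectile_score_def indicator_def)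
    then have "(\<integral>\<^sup>+ s. ennreal (elem_expectile_score \<alpha> (- s) x y) \<partial>?\<nu>)
        = ennreal (1 - \<alpha>) * (\<integral>\<^sup>+ s. ennreal (indicator {-x<..-y} s * (- s - y)) \<partial>?\<nu>)"
      using assms by (simp add: ennreal_mult' nn_integral_cmult)
    also have "\<dots> = ennreal (1 - \<alpha>) * ennreal (left_deriv f x * (x - y) - (f x - f y))"
      by (simp only: left_deriv_measure_bregman_reverse[OF f 2])
    also have "\<dots> = ennreal (expectile_score \<alpha> f x y)"
    proof -
      have "expectile_score \<alpha> f x y = (1 - \<alpha>) * (left_deriv f x * (x - y) - (f x - f y))"
        using 2 assms by (simp add: expectile_score_def algebra_simps)
      with assms show ?thesis by (simp add: ennreal_mult')
    qed
    finally show ?thesis ..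
  qed (simp add: elem_expectile_score_def expectile_score_def)
qed

lemma nn_integral_expectile_score_mixture:
  assumes "sigma_finite_measure M" and f: "convex_on UNIV f" and "0 \<le> \<alpha>" "\<alpha> \<le> 1"
    and [measurable]: "X \<in> borel_measurable M" "Y \<in> borel_measurable M"
  shows "(\<integral>\<^sup>+ \<omega>. ennreal (expectile_score \<alpha> f (X \<omega>) (Y \<omega>)) \<partial>M)
       = (\<integral>\<^sup>+ s. (\<integral>\<^sup>+ \<omega>. ennreal (elem_expectile_score \<alpha> (- s) (X \<omega>) (Y \<omega>)) \<partial>M) \<partial>left_deriv_measure f)"
proof -
  interpret M: sigma_finite_measure M by fact
  interpret \<nu>: sigma_finite_measure "left_deriv_measure f"
    by (rule sigma_finite_left_deriv_measure[OF f])
  interpret P: pair_sigma_finite M "left_deriv_measure f" ..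
  have "(\<lambda>(\<omega>, s). ennreal (elem_expectile_score \<alpha> (- s) (X \<omega>) (Y \<omega>)))
      \<in> borel_measurable (M \<Otimes>\<^sub>M left_deriv_measure f)"
    unfolding elem_expectile_score_def by measurable
  then show ?thesis
    using P.Fubini' by (simp add: expectile_score_mixture[OF assms(2-4)])
qed

theorem mainTheorem7:
  fixes M :: "'a measure" and X1 X2 Y :: "'a \<Rightarrow> real" and \<alpha> :: real
  assumes "prob_space M"
    and "0 < \<alpha>" and "\<alpha> < 1"
    and "X1 \<in> borel_measurable M" and "X2 \<in> borel_measurable M" and "Y \<in> borel_measurable M"
    and "\<forall>\<theta>::real. (\<integral>\<^sup>+ \<omega>. ennreal (elem_expectile_score \<alpha> \<theta> (X1 \<omega>) (Y \<omega>)) \<partial>M)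
                   \<le> (\<integral>\<^sup>+ \<omega>. ennreal (elem_expectile_score \<alpha> \<theta> (X2 \<omega>) (Y \<omega>)) \<partial>M)"
  shows "\<forall>S \<in> expectile_class \<alpha>.
           (\<integral>\<^sup>+ \<omega>. ennreal (S (X1 \<omega>) (Y \<omega>)) \<partial>M) \<le> (\<integral>\<^sup>+ \<omega>. ennreal (S (X2 \<omega>) (Y \<omega>)) \<partial>M)"
proof
  fix S assume "S \<in> expectile_class \<alpha>"
  then obtain f where f: "convex_on UNIV f" and S: "S = expectile_score \<alpha> f"
    unfolding expectile_class_def by blast
  have M: "sigma_finite_measure M"
    using assms(1) by (simp add: prob_space_imp_sigma_finite)
  have \<alpha>: "0 \<le> \<alpha>" "\<alpha> \<le> 1" using assms(2,3) by auto
  have "(\<integral>\<^sup>+ s. (\<integral>\<^sup>+ \<omega>. ennreal (elem_expectile_score \<alpha> (- s) (X1 \<omega>) (Y \<omega>)) \<partial>M) \<partial>left_deriv_measure f)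
     \<le> (\<integral>\<^sup>+ s. (\<integral>\<^sup>+ \<omega>. ennreal (elem_expectile_score \<alpha> (- s) (X2 \<omega>) (Y \<omega>)) \<partial>M) \<partial>left_deriv_measure f)"
    by (rule nn_integral_mono) (use assms(7) in blast)
  then show "(\<integral>\<^sup>+ \<omega>. ennreal (S (X1 \<omega>) (Y \<omega>)) \<partial>M) \<le> (\<integral>\<^sup>+ \<omega>. ennreal (S (X2 \<omega>) (Y \<omega>)) \<partial>M)"
    unfolding S using assms(4-6)
    by (simp add: nn_integral_expectile_score_mixture[OF M f \<alpha>])
qed

end
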